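(* Let $(X,\le)$ be a non-empty strictly inductive poset, let $f:X\to X$ and $a_0\in X$, let $(a_k)_k$ be the transfinite sequence of iterates of $f$ from $a_0$, and let $A=\{a_k\mid k \text{ an ordinal}\}$. Suppose $a_0\le f(a_0)$ and that for all $x,y\in A$, if $x\le f(x)\le y$ then $f(x)\le f(y)$. Then the sequence is monotone: $a_k\le a_l$ whenever $k<l$.
   Context: A poset is strictly inductive if every non-empty chain (totally ordered subset) has a least upper bound $\mathrm{lub}$ in $X$. The transfinite iterates are defined by $a_0$ given, $a_{k+1}=f(a_k)$, and $a_l=\mathrm{lub}\{a_k\mid k<l\}$ for limit ordinals $l$. *)

theory Defs
  imports Main
begin

text \<open>Least upper bound of a set in a partial order (the poset X is the whole type).\<close>
definition is_lub :: "'a::order set \<Rightarrow> 'a \<Rightarrow> bool" where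
  "is_lub S u \<longleftrightarrow> (\<forall>x\<in>S. x \<le> u) \<and> (\<forall>v. (\<forall>x\<in>S. x \<le> v) \<longrightarrow> u \<le> v)"

definition strictly_inductive :: "'a::order itself \<Rightarrow> bool" where
  "strictly_inductive _ \<longleftrightarrow>
     (\<forall>S::'a set. S \<noteq> {} \<and> Complete_Partial_Order.chain (\<le>) S \<longrightarrow> (\<exists>u. is_lub S u))"

text \<open>Ordinals are represented by the elements of an arbitrary well-ordered index type 'o.
  The sequence a is the transfinite iterate sequence of f from a0:
  a at the least index is a0, a at the successor of k is f (a k),
  and a at a limit index l is the lub of {a k | k < l}.\<close>
definition transfinite_iterates ::
    "('a::order \<Rightarrow> 'a) \<Rightarrow> 'a \<Rightarrow> ('o::wellorder \<Rightarrow> 'a) \<Rightarrow> bool" where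
  "transfinite_iterates f a0 a \<longleftrightarrow>
     (\<forall>k. (\<forall>j. \<not> j < k) \<longrightarrow> a k = a0) \<and>
     (\<forall>k l. k < l \<and> (\<forall>j. \<not> (k < j \<and> j < l)) \<longrightarrow> a l = f (a k)) \<and>
     (\<forall>l. (\<exists>j. j < l) \<and> (\<forall>k<l. \<exists>j. k < j \<and> j < l) \<longrightarrow> is_lub {a k | k. k < l} (a l))"

end

theory Submission
  imports Defs
begin

text \<open>By well-founded induction on \<open>l\<close> one shows simultaneously that \<open>a\<close> is increasing
  below \<open>l\<close> and that \<open>a l \<le> f (a l)\<close>. At a successor \<open>l = k + 1\<close> we have
  \<open>a k \<le> f (a k) = a l\<close>, and the hypothesis on \<open>f\<close> with \<open>x = a k\<close>, \<open>y = a l\<close> gives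
  \<open>a l = f (a k) \<le> f (a l)\<close>. At a limit \<open>l\<close> every \<open>k < l\<close> satisfies
  \<open>a k \<le> f (a k) = a (k + 1) \<le> a l\<close>, hence \<open>a k \<le> f (a k) \<le> f (a l)\<close>; so \<open>f (a l)\<close> bounds
  the iterates below \<open>l\<close> and therefore dominates their least upper bound \<open>a l\<close>.\<close>

lemma immediate_successor_exists:
  fixes k j :: "'o::wellorder"
  assumes "k < j"
  obtains s where "k < s" "s \<le> j" "\<forall>i. \<not> (k < i \<and> i < s)"
proof
  show "k < (LEAST i. k < i)" using LeastI[of "\<lambda>i. k < i", OF assms] .
  show "(LEAST i. k < i) \<le> j" using Least_le[of "\<lambda>i. k < i", OF assms] .
  show "\<forall>i. \<not> (k < i \<and> i < (LEAST i. k < i))" using not_less_Least by blast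
qed

lemma transfinite_iterates_least:
  assumes "transfinite_iterates f a0 a" "\<forall>j. \<not> j < k"
  shows "a k = a0"
  using assms unfolding transfinite_iterates_def by blast

lemma transfinite_iterates_succ:
  assumes "transfinite_iterates f a0 a" "k < l" "\<forall>j. \<not> (k < j \<and> j < l)"
  shows "a l = f (a k)"
  using assms unfolding transfinite_iterates_def by blast

lemma transfinite_iterates_limit:
  assumes "transfinite_iterates f a0 a" "j < l" "\<forall>k<l. \<exists>j. k < j \<and> j < l"
  shows "is_lub {a k | k. k < l} (a l)"
  using assms unfolding transfinite_iterates_def by blast

lemma transfinite_iterates_inflationary_succ:
  assumes iter: "transfinite_iterates f a0 a"
    and mono: "\<forall>x\<in>range a. \<forall>y\<in>range a. x \<le> f x \<and> f x \<le> y \<longrightarrow> f x \<le> f y"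
    and succ: "k < l" "\<forall>j. \<not> (k < j \<and> j < l)"
    and incr: "\<forall>j<k. a j \<le> a k" and infl: "a k \<le> f (a k)"
  shows "(\<forall>j<l. a j \<le> a l) \<and> a l \<le> f (a l)"
proof
  have al: "a l = f (a k)" using transfinite_iterates_succ[OF iter succ] .
  have "j < k \<or> j = k" if "j < l" for j using succ(2) that by (metis neqE)
  then show "\<forall>j<l. a j \<le> a l" using incr infl al by (auto intro: order_trans)
  have "f (a k) \<le> f (a l)" using mono infl al by (metis order.refl rangeI)
  then show "a l \<le> f (a l)" using al by simp
qed

lemma transfinite_iterates_inflationary_limit:
  assumes iter: "transfinite_iterates f a0 a"
    and mono: "\<forall>x\<in>range a. \<forall>y\<in>range a. x \<le> f x \<and> f x \<le> y \<longrightarrow> f x \<le> f y"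
    and lub: "is_lub {a k | k. k < l} (a l)"
    and limit: "\<forall>k<l. \<exists>j. k < j \<and> j < l"
    and infl: "\<forall>k<l. a k \<le> f (a k)"
  shows "a l \<le> f (a l)"
proof -
  have "a k \<le> f (a l)" if kl: "k < l" for k
  proof -
    obtain j where "k < j" "j < l" using limit kl by blast
    then obtain s where s: "k < s" "s < l" "\<forall>i. \<not> (k < i \<and> i < s)"
      by (metis immediate_successor_exists order.strict_trans1)
    have "f (a k) = a s" using transfinite_iterates_succ[OF iter s(1,3)] by simp
    also have "\<dots> \<le> a l" using lub s(2) unfolding is_lub_def by blast
    finally have "f (a k) \<le> f (a l)" using mono infl kl by auto
    then show ?thesis using infl kl by (auto intro: order_trans)
  qed
  then show ?thesis using lub unfolding is_lub_def by blast
qed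

lemma transfinite_iterates_increasing_inflationary:
  assumes iter: "transfinite_iterates f a0 a" and start: "a0 \<le> f a0"
    and mono: "\<forall>x\<in>range a. \<forall>y\<in>range a. x \<le> f x \<and> f x \<le> y \<longrightarrow> f x \<le> f y"
  shows "(\<forall>k<l. a k \<le> a l) \<and> a l \<le> f (a l)"
proof (induction l rule: less_induct)
  case (less l)
  consider (least) "\<forall>j. \<not> j < l"
    | (succ) k where "k < l" "\<forall>j. \<not> (k < j \<and> j < l)"
    | (limit) j where "j < l" "\<forall>k<l. \<exists>j. k < j \<and> j < l"
    by blast
  then show ?case
  proof cases
    case least
    then show ?thesis using transfinite_iterates_least[OF iter] start by simp
  next
    case (succ k)
    then show ?thesis
      using less.IH transfinite_iterates_inflationary_succ[OF iter mono] by blast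
  next
    case (limit j)
    note lub = transfinite_iterates_limit[OF iter limit]
    have "\<forall>k<l. a k \<le> a l" using lub unfolding is_lub_def by blast
    moreover have "a l \<le> f (a l)"
      using transfinite_iterates_inflationary_limit[OF iter mono lub limit(2)] less.IH by blast
    ultimately show ?thesis by blast
  qed
qed

theorem mainTheorem2:
  fixes f :: "'a::order \<Rightarrow> 'a" and a0 :: 'a and a :: "'o::wellorder \<Rightarrow> 'a"
  assumes "strictly_inductive TYPE('a)"
    and "transfinite_iterates f a0 a"
    and "a0 \<le> f a0"
    and "\<forall>x\<in>range a. \<forall>y\<in>range a. x \<le> f x \<and> f x \<le> y \<longrightarrow> f x \<le> f y"
  shows "\<forall>k l. k < l \<longrightarrow> a k \<le> a l"
  using transfinite_iterates_increasing_inflationary[OF assms(2-4)] by blast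

end
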